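(* In the acoustic setting, suppose $A<0$ on $[\rho_-,\rho_+]$, $A^2+B^2=1$ at $\rho_\pm$ and $A^2+B^2>1$ on $(\rho_-,\rho_+)$, $A(\rho)=-1$ exactly at $\rho_1<\rho_2$ in $(\rho_-,\rho_+)$ with $A<-1$ on $(\rho_1,\rho_2)$, and there is $\rho_0\in(\rho_1,\rho_2)$ with $B>0$ on $[\rho_-,\rho_0)$, $B(\rho_0)=0$, $B<0$ on $(\rho_0,\rho_+]$. Then $d\rho^+/dt>0$ on $(\rho_-,\rho_1)$ and $d\rho^+/dt<0$ on $(\rho_1,\rho_+)$ (so the $(+)$ family starts on both ergospheres $\rho=\rho_-$ and $\rho=\rho_+$), and $d\varphi^+/dt=B(\rho_1)/\rho_1>0$ at $\rho=\rho_1$. Consequently every $(+)$ trajectory in the ergoregion satisfies $\rho^+(t)\to\rho_1$ as $t\to+\infty$, approaching the horizon $\rho=\rho_1$, which is traversed counterclockwise.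
   Context: Acoustic metric in the plane with polar coordinates $(\rho,\varphi)$: Hamiltonian $H=(\tau+A\xi_\rho+B\xi_\varphi/\rho)^2-\xi_\rho^2-(\xi_\varphi/\rho)^2$, $A=A(\rho)$, $B=B(\rho)$ smooth. The ergoregion is the annulus $\rho_-<\rho<\rho_+$ where $A^2+B^2>1$. Zero-energy null geodesics are the null bicharacteristics with $\tau=0$ parametrized by $t$; the sign in $\xi_\rho=\frac{-AB\pm\sqrt{A^2+B^2-1}}{A^2-1}\,\xi_\varphi/\rho$ defines the $(\pm)$ family. With $s=\sqrt{A^2+B^2-1}$, the equations of motion in the ergoregion are $$\frac{d\rho^\pm}{dt}=\frac{A(A^2+B^2-1)\pm Bs}{A^2+B^2},\qquad \frac{d\varphi^\pm}{dt}=\frac{s\,(Bs\mp A)}{\rho\,(A^2+B^2)}.$$ A horizon of the $(\pm)$ family is a circle $\{\rho=c\}$ in the ergoregion which is a closed trajectory of that family. *)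

theory Defs
  imports "HOL-Analysis.Analysis"
begin

definition smooth_fun :: "(real \<Rightarrow> real) \<Rightarrow> bool" where
  "smooth_fun f \<longleftrightarrow> (\<forall>n. \<forall>x. ((deriv ^^ n) f) differentiable (at x))"

definition s_fun :: "(real \<Rightarrow> real) \<Rightarrow> (real \<Rightarrow> real) \<Rightarrow> real \<Rightarrow> real" where
  "s_fun A B r = sqrt ((A r)^2 + (B r)^2 - 1)"

definition drho_plus :: "(real \<Rightarrow> real) \<Rightarrow> (real \<Rightarrow> real) \<Rightarrow> real \<Rightarrow> real" where
  "drho_plus A B r =
     (A r * ((A r)^2 + (B r)^2 - 1) + B r * s_fun A B r) / ((A r)^2 + (B r)^2)"

definition dphi_plus :: "(real \<Rightarrow> real) \<Rightarrow> (real \<Rightarrow> real) \<Rightarrow> real \<Rightarrow> real" where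
  "dphi_plus A B r =
     s_fun A B r * (B r * s_fun A B r - A r) / (r * ((A r)^2 + (B r)^2))"

text \<open>A (+) zero-energy null geodesic (t \<mapsto> (rho t, phi t)) defined for all t \<ge> 0
  and lying in the ergoregion rho_- < rho < rho_+.\<close>
definition plus_trajectory_in_ergo ::
  "(real \<Rightarrow> real) \<Rightarrow> (real \<Rightarrow> real) \<Rightarrow> real \<Rightarrow> real \<Rightarrow>
   (real \<Rightarrow> real) \<Rightarrow> (real \<Rightarrow> real) \<Rightarrow> bool" where
  "plus_trajectory_in_ergo A B rm rp rho phi \<longleftrightarrow>
     (\<forall>t\<ge>0. rho t \<in> {rm<..<rp} \<and>
        (rho has_real_derivative drho_plus A B (rho t)) (at t within {0..}) \<and>
        (phi has_real_derivative dphi_plus A B (rho t)) (at t within {0..}))"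

end

theory Submission
  imports Defs
begin

(* In the ergoregion d rho^+/dt = s (A s + B) / (A^2 + B^2), and
   (B + A s)(B - A s) = (1 - A^2)(A^2 + B^2). Whenever B - A s > 0 the sign of d rho^+/dt is
   therefore that of 1 - A^2: it is positive below rho_1 (where -1 < A < 0 < B) and negative
   above it (where A < -1 <= 0 <= B, or A < 0 and B < 0 so that the sign is evident).
   Thus rho_1 is an attracting equilibrium of the autonomous equation rho' = f(rho) on the
   ergoregion, and (rho - rho_1)^2 is a Lyapunov function; by compactness it decreases at a
   uniform rate as long as rho stays away from rho_1, which forces rho -> rho_1. *)

lemma conjugate_product_eq:
  fixes a b u :: real
  assumes "u^2 = a^2 + b^2 - 1"
  shows "(b + a*u) * (b - a*u) = (1 - a^2) * (a^2 + b^2)"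
proof -
  have "(b + a*u) * (b - a*u) = b^2 - a^2 * u^2" by (simp add: algebra_simps power2_eq_square)
  also have "\<dots> = (1 - a^2) * (a^2 + b^2)" unfolding assms by (simp add: algebra_simps power2_eq_square)
  finally show ?thesis .
qed

lemma conjugate_sum_pos:
  fixes a b u :: real
  assumes "-1 < a" "0 < b" "0 \<le> u" "u^2 = a^2 + b^2 - 1"
  shows "0 < a*u + b"
proof (cases "0 \<le> a")
  case True
  then show ?thesis using assms by (simp add: add_nonneg_pos)
next
  case False
  have "a*u \<le> 0" using False assms by (simp add: mult_nonpos_nonneg)
  then have "0 < b - a*u" using assms by linarith
  moreover have "a^2 < 1" using False assms by (simp add: abs_square_less_1)
  then have "0 < (1 - a^2) * (a^2 + b^2)" using assms by (simp add: add_nonneg_pos)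
  ultimately show ?thesis using conjugate_product_eq[OF assms(4)] zero_less_mult_pos2
    by (metis add.commute)
qed

lemma conjugate_sum_neg:
  fixes a b u :: real
  assumes "a < -1" "0 \<le> b" "0 < u" "u^2 = a^2 + b^2 - 1"
  shows "a*u + b < 0"
proof -
  have "a*u < 0" using assms by (simp add: mult_neg_pos)
  then have "0 < b - a*u" using assms by linarith
  moreover have "1 < (-a) * (-a)" using assms by (intro less_1_mult) linarith+
  then have "1 < a^2" by (simp add: power2_eq_square)
  then have "(1 - a^2) * (a^2 + b^2) < 0" by (intro mult_neg_pos) (auto intro!: add_pos_nonneg)
  then have "(b + a*u) * (b - a*u) < 0" using conjugate_product_eq[OF assms(4)] by simp
  ultimately show ?thesis by (simp add: mult_less_0_iff)
qed

lemma drho_plus_eq: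
  assumes "(A r)^2 + (B r)^2 > 1"
  shows "drho_plus A B r = s_fun A B r * (A r * s_fun A B r + B r) / ((A r)^2 + (B r)^2)"
proof -
  have "(A r)^2 + (B r)^2 - 1 = (s_fun A B r)^2" using assms by (simp add: s_fun_def)
  then show ?thesis unfolding drho_plus_def by (simp add: power2_eq_square algebra_simps)
qed

lemma drho_plus_pos:
  assumes "(A r)^2 + (B r)^2 > 1" "-1 < A r" "0 < B r"
  shows "drho_plus A B r > 0"
proof -
  have "s_fun A B r > 0" "(s_fun A B r)^2 = (A r)^2 + (B r)^2 - 1"
    using assms(1) by (simp_all add: s_fun_def)
  then have "0 < A r * s_fun A B r + B r" using assms by (intro conjugate_sum_pos) auto
  then show ?thesis using assms(1) \<open>s_fun A B r > 0\<close> by (simp add: drho_plus_eq)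
qed

lemma drho_plus_neg_of_A_lt_minus_one:
  assumes "(A r)^2 + (B r)^2 > 1" "A r < -1" "0 \<le> B r"
  shows "drho_plus A B r < 0"
proof -
  have "s_fun A B r > 0" "(s_fun A B r)^2 = (A r)^2 + (B r)^2 - 1"
    using assms(1) by (simp_all add: s_fun_def)
  then have "A r * s_fun A B r + B r < 0" using assms by (intro conjugate_sum_neg) auto
  then show ?thesis using assms(1) \<open>s_fun A B r > 0\<close>
    by (simp add: drho_plus_eq divide_less_0_iff mult_pos_neg)
qed

lemma drho_plus_neg_of_B_neg:
  assumes "(A r)^2 + (B r)^2 > 1" "A r < 0" "B r < 0"
  shows "drho_plus A B r < 0"
proof -
  have "s_fun A B r > 0" using assms(1) by (simp add: s_fun_def)
  then have "A r * s_fun A B r + B r < 0" using assms by (simp add: mult_neg_pos add_neg_neg)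
  then show ?thesis using assms(1) \<open>s_fun A B r > 0\<close>
    by (simp add: drho_plus_eq divide_less_0_iff mult_pos_neg)
qed

lemma horizon_velocities:
  assumes "A r = -1" "0 < B r"
  shows "drho_plus A B r = 0" "dphi_plus A B r = B r / r"
proof -
  have s: "s_fun A B r = B r" using assms by (simp add: s_fun_def)
  show "drho_plus A B r = 0" unfolding drho_plus_def s assms(1) by (simp add: power2_eq_square)
  have "dphi_plus A B r = (B r * (1 + (B r)^2)) / (r * (1 + (B r)^2))"
    unfolding dphi_plus_def s assms(1) by (simp add: power2_eq_square algebra_simps)
  moreover have "0 < 1 + (B r)^2" by (intro add_pos_nonneg) auto
  ultimately show "dphi_plus A B r = B r / r" by simp
qed

lemma smooth_fun_continuous_on: "smooth_fun f \<Longrightarrow> continuous_on S f"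
  unfolding smooth_fun_def
  by (metis funpow_0 continuous_at_imp_continuous_on differentiable_imp_continuous_within)

lemma continuous_on_gt_of_no_crossing:
  fixes g :: "real \<Rightarrow> real"
  assumes "continuous_on {a..b} g" "y < g a" "\<And>t. t \<in> {a<..<b} \<Longrightarrow> g t \<noteq> y"
    and "a \<le> t" "t < b"
  shows "y < g t"
proof (rule ccontr)
  assume "\<not> y < g t"
  then obtain t' where "a \<le> t'" "t' \<le> t" "g t' = y"
    using IVT2'[of g t y a] assms continuous_on_subset[OF assms(1)] by force
  moreover have "t' \<noteq> a" using \<open>g t' = y\<close> assms(2) by auto
  ultimately have "t' \<in> {a<..<b}" using assms(5) by auto
  then show False using assms(3) \<open>g t' = y\<close> by blast
qed

lemma compact_neg_bounded_away:
  fixes g :: "'a::topological_space \<Rightarrow> real"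
  assumes "compact K" "continuous_on K g" "\<And>y. y \<in> K \<Longrightarrow> g y < 0"
  shows "\<exists>m>0. \<forall>y\<in>K. g y \<le> -m"
proof (cases "K = {}")
  case False
  then obtain z where "z \<in> K" "\<forall>y\<in>K. g y \<le> g z"
    using continuous_attains_sup[OF assms(1) _ assms(2)] by blast
  then show ?thesis using assms(3) by (intro exI[of _ "- g z"]) auto
qed (auto intro: exI[of _ 1])

locale attracting_trajectory =
  fixes I :: "real set" and f :: "real \<Rightarrow> real" and c :: real and x :: "real \<Rightarrow> real"
  assumes interval: "is_interval I"
    and continuous: "continuous_on I f"
    and equilibrium: "c \<in> I"
    and attracting: "\<And>y. y \<in> I \<Longrightarrow> y \<noteq> c \<Longrightarrow> (y - c) * f y < 0"
    and trajectory_in: "\<And>t. 0 \<le> t \<Longrightarrow> x t \<in> I"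
    and trajectory_deriv: "\<And>t. 0 \<le> t \<Longrightarrow> (x has_real_derivative f (x t)) (at t within {0..})"
begin

lemma sq_dist_mvt:
  assumes "0 \<le> a" "a \<le> b"
  shows "\<exists>y\<in>{a..b}. (x b - c)^2 - (x a - c)^2 = 2 * ((x y - c) * f (x y)) * (b - a)"
proof -
  have "((\<lambda>t. (x t - c)^2) has_real_derivative 2 * ((x t - c) * f (x t))) (at t within {a..b})"
    if "a \<le> t" "t \<le> b" for t
    using trajectory_deriv[of t] that assms
    by (auto intro!: derivative_eq_intros intro: has_field_derivative_subset)
  then show ?thesis
    by (intro mvt_very_simple[OF assms(2)] has_field_derivative_imp_has_derivative) auto
qed

lemma sq_dist_antimono:
  assumes "0 \<le> a" "a \<le> b"
  shows "(x b - c)^2 \<le> (x a - c)^2"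
proof -
  obtain y where y: "y \<in> {a..b}"
    and eq: "(x b - c)^2 - (x a - c)^2 = 2 * ((x y - c) * f (x y)) * (b - a)"
    using sq_dist_mvt[OF assms] by blast
  have "(x y - c) * f (x y) \<le> 0"
    using attracting[of "x y"] trajectory_in[of y] y assms by (cases "x y = c") force+
  then show ?thesis using eq assms by (smt (verit) mult_nonpos_nonneg)
qed

lemma continuous_on_trajectory: "continuous_on {0..} x"
  unfolding continuous_on_eq_continuous_within
  using trajectory_deriv DERIV_continuous by (metis atLeast_iff)

lemma trajectory_same_side:
  assumes avoids: "\<And>t. 0 \<le> t \<Longrightarrow> x t \<noteq> c" and "0 \<le> t"
  shows "0 < (x 0 - c) * (x t - c)"
proof (rule ccontr)
  assume "\<not> ?thesis"
  moreover have "x 0 \<noteq> c" "x t \<noteq> c" using avoids assms(2) by auto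
  ultimately have opposite: "x 0 < c \<and> c < x t \<or> x t < c \<and> c < x 0"
    by (auto simp: zero_less_mult_iff)
  have "continuous_on {0..t} x"
    using continuous_on_subset[OF continuous_on_trajectory] by auto
  then have "\<exists>s. 0 \<le> s \<and> s \<le> t \<and> x s = c"
    using opposite IVT'[of x 0 c t] IVT2'[of x t c 0] \<open>0 \<le> t\<close> by (meson less_imp_le)
  then show False using avoids by blast
qed

lemma sq_dist_eventually_less:
  assumes "0 < \<epsilon>"
  shows "\<exists>T\<ge>0. (x T - c)^2 < \<epsilon>"
proof (rule ccontr)
  assume "\<not> ?thesis"
  then have far: "\<And>t. 0 \<le> t \<Longrightarrow> \<epsilon> \<le> (x t - c)^2" by force
  then have avoids: "\<And>t. 0 \<le> t \<Longrightarrow> x t \<noteq> c" using assms by force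
  define K where "K = closed_segment (x 0) c \<inter> {y. \<epsilon> \<le> (y - c)^2}"
  have in_K: "x t \<in> K" if t: "0 \<le> t" for t
  proof -
    have "\<bar>x t - c\<bar> \<le> \<bar>x 0 - c\<bar>"
      using sq_dist_antimono[OF order.refl t] by (simp add: abs_le_square_iff)
    moreover have "0 < (x 0 - c) * (x t - c)" by (rule trajectory_same_side[OF avoids t])
    ultimately have "x t \<in> closed_segment (x 0) c"
      by (auto simp: closed_segment_eq_real_ivl zero_less_mult_iff)
    then show ?thesis using far[OF t] by (simp add: K_def)
  qed
  have "closed_segment (x 0) c \<subseteq> I"
    using interval trajectory_in[of 0] equilibrium by (simp add: is_interval_convex_1 closed_segment_subset)
  then have K_sub: "K \<subseteq> I" "c \<notin> K" using assms by (auto simp: K_def)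
  have "compact K"
    unfolding K_def by (intro compact_Int_closed compact_segment closed_Collect_le continuous_intros)
  moreover have "continuous_on K (\<lambda>y. (y - c) * f y)"
    by (intro continuous_intros continuous_on_subset[OF continuous K_sub(1)])
  moreover have "\<And>y. y \<in> K \<Longrightarrow> (y - c) * f y < 0"
    using attracting K_sub by blast
  ultimately obtain m where "0 < m" and bound: "\<And>y. y \<in> K \<Longrightarrow> (y - c) * f y \<le> -m"
    using compact_neg_bounded_away[of K "\<lambda>y. (y - c) * f y"] by blast
  have decay: "(x t - c)^2 \<le> (x 0 - c)^2 - 2 * m * t" if t: "0 \<le> t" for t
  proof -
    obtain y where y: "y \<in> {0..t}"
      and eq: "(x t - c)^2 - (x 0 - c)^2 = 2 * ((x y - c) * f (x y)) * (t - 0)"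
      using sq_dist_mvt[OF order.refl t] by blast
    have "(x y - c) * f (x y) \<le> -m" using bound in_K y by auto
    then have "2 * ((x y - c) * f (x y)) * t \<le> 2 * (-m) * t"
      by (intro mult_right_mono[OF _ t]) linarith
    then show ?thesis using eq unfolding diff_0_right by linarith
  qed
  define T where "T = (x 0 - c)^2 / (2 * m) + 1"
  have "0 \<le> (x T - c)^2" by simp
  also have "(x T - c)^2 \<le> (x 0 - c)^2 - 2 * m * T"
    using \<open>0 < m\<close> by (intro decay) (simp add: T_def)
  also have "\<dots> = - 2 * m" using \<open>0 < m\<close> by (simp add: T_def field_simps)
  finally show False using \<open>0 < m\<close> by linarith
qed

theorem tendsto_equilibrium: "(x \<longlongrightarrow> c) at_top"
proof (rule tendstoI)
  fix e :: real assume "0 < e"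
  then obtain T where "0 \<le> T" "(x T - c)^2 < e^2"
    using sq_dist_eventually_less[of "e^2"] by auto
  have "dist (x t) c < e" if "T \<le> t" for t
  proof -
    have "\<bar>x t - c\<bar>^2 < e^2"
      using sq_dist_antimono[of T t] that \<open>0 \<le> T\<close> \<open>(x T - c)^2 < e^2\<close> by simp
    then show ?thesis using \<open>0 < e\<close> by (simp add: dist_real_def power2_less_imp_less)
  qed
  then show "\<forall>\<^sub>F t in at_top. dist (x t) c < e"
    unfolding eventually_at_top_linorder by blast
qed

end

lemma continuous_on_drho_plus:
  assumes "continuous_on S A" "continuous_on S B" "\<And>r. r \<in> S \<Longrightarrow> (A r)^2 + (B r)^2 \<noteq> 0"
  shows "continuous_on S (drho_plus A B)"
  unfolding drho_plus_def s_fun_def using assms by (intro continuous_intros) auto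

lemma plus_trajectory_tendsto_equilibrium:
  assumes "r1 \<in> {rm<..<rp}"
    and "continuous_on {rm<..<rp} (drho_plus A B)"
    and "\<And>r. r \<in> {rm<..<rp} \<Longrightarrow> r \<noteq> r1 \<Longrightarrow> (r - r1) * drho_plus A B r < 0"
    and "plus_trajectory_in_ergo A B rm rp rho phi"
  shows "(rho \<longlongrightarrow> r1) at_top"
proof -
  interpret attracting_trajectory "{rm<..<rp}" "drho_plus A B" r1 rho
    using assms by unfold_locales (auto simp: plus_trajectory_in_ergo_def is_interval_def)
  show ?thesis by (rule tendsto_equilibrium)
qed

theorem mainTheorem9:
  fixes A B :: "real \<Rightarrow> real" and rm rp r0 r1 r2 :: real
  assumes smoothA: "smooth_fun A" and smoothB: "smooth_fun B"
    and pos: "0 < rm"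
    and order: "rm < r1" "r1 < r0" "r0 < r2" "r2 < rp"
    and Aneg: "\<forall>r\<in>{rm..rp}. A r < 0"
    and ergo_m: "(A rm)^2 + (B rm)^2 = 1"
    and ergo_p: "(A rp)^2 + (B rp)^2 = 1"
    and ergo: "\<forall>r\<in>{rm<..<rp}. (A r)^2 + (B r)^2 > 1"
    and Am1: "\<forall>r\<in>{rm<..<rp}. A r = -1 \<longleftrightarrow> (r = r1 \<or> r = r2)"
    and Alt: "\<forall>r\<in>{r1<..<r2}. A r < -1"
    and Bpos: "\<forall>r\<in>{rm..<r0}. B r > 0"
    and B0: "B r0 = 0"
    and Bneg: "\<forall>r\<in>{r0<..rp}. B r < 0"
  shows "(\<forall>r\<in>{rm<..<r1}. drho_plus A B r > 0)
       \<and> (\<forall>r\<in>{r1<..<rp}. drho_plus A B r < 0)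
       \<and> drho_plus A B r1 = 0
       \<and> dphi_plus A B r1 = B r1 / r1 \<and> B r1 / r1 > 0
       \<and> (\<forall>rho phi. plus_trajectory_in_ergo A B rm rp rho phi
                \<longrightarrow> (rho \<longlongrightarrow> r1) at_top)"
proof -
  have contA: "continuous_on S A" and contB: "continuous_on S B" for S
    using smoothA smoothB by (simp_all add: smooth_fun_continuous_on)
  have Ar1: "A r1 = -1" and Br1: "0 < B r1" using Am1 Bpos order by auto
  have "(A rm)^2 < 1" using ergo_m Bpos order by (smt (verit) atLeastLessThan_iff zero_less_power2)
  then have "-1 < A rm" by (simp add: abs_square_less_1)
  moreover have "A t \<noteq> -1" if "t \<in> {rm<..<r1}" for t
    using Am1 order that by fastforce
  ultimately have A_above: "-1 < A r" if "rm \<le> r" "r < r1" for r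
    using continuous_on_gt_of_no_crossing[OF contA] that by blast
  have before: "\<forall>r\<in>{rm<..<r1}. drho_plus A B r > 0"
    using ergo Bpos A_above order by (auto intro!: drho_plus_pos)
  have after: "drho_plus A B r < 0" if r: "r \<in> {r1<..<rp}" for r
  proof (cases "r \<le> r0")
    case True
    then have "0 \<le> B r" using Bpos B0 r order by (cases "r = r0") (auto intro: less_imp_le)
    then show ?thesis using True r ergo Alt order by (auto intro!: drho_plus_neg_of_A_lt_minus_one)
  next
    case False
    then show ?thesis using r ergo Aneg Bneg order by (auto intro!: drho_plus_neg_of_B_neg)
  qed
  have "(r - r1) * drho_plus A B r < 0" if "r \<in> {rm<..<rp}" "r \<noteq> r1" for r
    using before after[of r] that by (cases "r < r1") (auto simp: mult_neg_pos mult_pos_neg)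
  moreover have "continuous_on {rm<..<rp} (drho_plus A B)"
    using ergo by (intro continuous_on_drho_plus contA contB) force
  ultimately have "(rho \<longlongrightarrow> r1) at_top" if "plus_trajectory_in_ergo A B rm rp rho phi" for rho phi
    using order that by (intro plus_trajectory_tendsto_equilibrium) auto
  then show ?thesis
    using before after horizon_velocities[where A = A and B = B, OF Ar1 Br1] Br1 pos order by auto
qed

end
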